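(* Let $\mathcal S\in\mathrm{TP}(n)$ and let $C\subseteq[n]$ with $|C|\ge 2$. Let $D$ be the minimal element of $\mathrm{cip}(\mathcal S)$ containing $C$. Then there exist distinct $i,j\in C$ such that $\overline{ij}=D$.
   Context: A rooted tree on leaf set $[n]$ has leaves labeled bijectively by $[n]$ and internal vertices each with at least two children; a clade is the set of leaves below an internal vertex, and $\mathrm{clade}(T)$ is the set of clades (including $[n]$). $\mathrm{TP}(n)$ is the collection of all sets of the form $\mathcal S=\mathrm{clade}(T_1)\cup\mathrm{clade}(T_2)$ for rooted trees $T_1,T_2$ on leaf set $[n]$. The clade intersection poset $\mathrm{cip}(\mathcal S)$ consists of the elements of $\mathcal S$ together with all intersections of elements of $\mathcal S$ that contain at least two elements, partially ordered by inclusion. For a pair $i\ne j$, $\overline{ij}$ denotes the unique smallest element of $\mathrm{cip}(\mathcal S)$ containing $\{i,j\}$ (and, similarly, the minimal element of $\mathrm{cip}(\mathcal S)$ containing a set $C$ with $|C|\ge2$ is the intersection of all elements of $\mathcal S$ containing $C$). *)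

theory Defs
  imports Main
begin

datatype rtree = Leaf nat | Node "rtree list"

fun leaf_list :: "rtree \<Rightarrow> nat list" where
  "leaf_list (Leaf i) = [i]"
| "leaf_list (Node ts) = concat (map leaf_list ts)"

definition leaves :: "rtree \<Rightarrow> nat set" where
  "leaves t = set (leaf_list t)"

fun wf_tree :: "rtree \<Rightarrow> bool" where
  "wf_tree (Leaf i) = True"
| "wf_tree (Node ts) = (2 \<le> length ts \<and> (\<forall>t\<in>set ts. wf_tree t))"

fun clades :: "rtree \<Rightarrow> nat set set" where
  "clades (Leaf i) = {}"
| "clades (Node ts) = insert (set (concat (map leaf_list ts))) (\<Union>t\<in>set ts. clades t)"

definition is_tree_on :: "nat \<Rightarrow> rtree \<Rightarrow> bool" where
  "is_tree_on n T \<longleftrightarrow> wf_tree T \<and> distinct (leaf_list T) \<and> set (leaf_list T) = {1..n}"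

definition clade :: "nat \<Rightarrow> rtree \<Rightarrow> nat set set" where
  "clade n T = insert {1..n} (clades T)"

definition TP :: "nat \<Rightarrow> nat set set set" where
  "TP n = {clade n T1 \<union> clade n T2 | T1 T2. is_tree_on n T1 \<and> is_tree_on n T2}"

text \<open>Clade intersection poset (as a set; ordered by inclusion).\<close>
definition cip :: "nat set set \<Rightarrow> nat set set" where
  "cip S = S \<union> {\<Inter>X | X. X \<subseteq> S \<and> X \<noteq> {} \<and> 2 \<le> card (\<Inter>X)}"

definition is_min_containing :: "nat set set \<Rightarrow> nat set \<Rightarrow> nat set \<Rightarrow> bool" where
  "is_min_containing S C D \<longleftrightarrow> D \<in> cip S \<and> C \<subseteq> D \<and> (\<forall>E\<in>cip S. C \<subseteq> E \<longrightarrow> D \<subseteq> E)"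

end

theory Submission
  imports Defs
begin

text \<open>In each tree \<open>T\<^sub>k\<close> let \<open>A\<^sub>k\<close> be the least clade containing \<open>C\<close>: the leaves of \<open>C\<close> lie in
at least two children of \<open>A\<^sub>k\<close>, and a clade of \<open>T\<^sub>k\<close> containing two leaves of \<open>C\<close> from different
children contains \<open>A\<^sub>k\<close>. Two partitions of \<open>C\<close> with at least two blocks each admit a pair \<open>i, j\<close>
separated by both, so every element of \<open>cip \<S>\<close> containing \<open>{i, j}\<close> contains \<open>A\<^sub>1 \<inter> A\<^sub>2\<close>.
This intersection lies in \<open>cip \<S>\<close> and contains \<open>C\<close>, hence contains \<open>D\<close>; so \<open>D\<close> is also the
least element above \<open>{i, j}\<close>.\<close>

lemma clades_subset_leaves: "E \<in> clades t \<Longrightarrow> E \<subseteq> set (leaf_list t)"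
  by (induction t rule: clades.induct) auto

lemma clade_subset_atLeastAtMost: "is_tree_on n T \<Longrightarrow> E \<in> clade n T \<Longrightarrow> E \<subseteq> {1..n}"
  using clades_subset_leaves unfolding clade_def is_tree_on_def by auto

lemma distinct_concat_map_common_elem:
  "distinct (concat (map f xs)) \<Longrightarrow> a \<in> set xs \<Longrightarrow> b \<in> set xs
   \<Longrightarrow> x \<in> set (f a) \<Longrightarrow> x \<in> set (f b) \<Longrightarrow> a = b"
  by (induction xs) auto

text \<open>\<open>A\<close> stands for the least common ancestor of \<open>C\<close> and \<open>g i\<close> for the child of \<open>A\<close> containing \<open>i\<close>.\<close>
definition lca_split :: "nat set set \<Rightarrow> nat set \<Rightarrow> nat set \<Rightarrow> (nat \<Rightarrow> 'b) \<Rightarrow> bool" where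
  "lca_split K C A g \<longleftrightarrow> A \<in> K \<and> C \<subseteq> A \<and> (\<exists>i\<in>C. \<exists>j\<in>C. g i \<noteq> g j) \<and>
     (\<forall>i\<in>C. \<forall>j\<in>C. g i \<noteq> g j \<longrightarrow> (\<forall>E\<in>K. {i, j} \<subseteq> E \<longrightarrow> A \<subseteq> E))"

lemma lca_splitI:
  assumes "A \<in> K" "C \<subseteq> A" "i \<in> C" "j \<in> C" "g i \<noteq> g j"
    and "\<And>i j E. i \<in> C \<Longrightarrow> j \<in> C \<Longrightarrow> g i \<noteq> g j \<Longrightarrow> E \<in> K \<Longrightarrow> {i, j} \<subseteq> E \<Longrightarrow> A \<subseteq> E"
  shows "lca_split K C A g"
  using assms unfolding lca_split_def by blast

lemma lca_split_above:
  "lca_split K C A g \<Longrightarrow> i \<in> C \<Longrightarrow> j \<in> C \<Longrightarrow> g i \<noteq> g j \<Longrightarrow> E \<in> K \<Longrightarrow> {i, j} \<subseteq> E \<Longrightarrow> A \<subseteq> E"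
  unfolding lca_split_def by blast

lemma lca_split_insert: "lca_split K C A g \<Longrightarrow> A \<subseteq> B \<Longrightarrow> lca_split (insert B K) C A g"
  unfolding lca_split_def by blast

lemma lca_split_clades:
  assumes "wf_tree T" "distinct (leaf_list T)" "C \<subseteq> set (leaf_list T)" "2 \<le> card C"
  shows "\<exists>A (g :: nat \<Rightarrow> rtree set). lca_split (clades T) C A g"
  using assms
proof (induction T arbitrary: C rule: wf_tree.induct)
  case (1 i)
  then have "card C \<le> card {i}"
    by (intro card_mono) auto
  with "1.prems"(4) show ?case by simp
next
  case (2 ts)
  let ?R = "set (leaf_list (Node ts))"
  have same_child: "t = t'"
    if "t \<in> set ts" "t' \<in> set ts" "i \<in> set (leaf_list t)" "i \<in> set (leaf_list t')" for t t' i
    using distinct_concat_map_common_elem[of leaf_list ts] that "2.prems"(2) by auto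
  have clade_cases: "E = ?R \<or> (\<exists>t\<in>set ts. E \<in> clades t)" if "E \<in> clades (Node ts)" for E
    using that by simp
  show ?case
  proof (cases "\<exists>t\<in>set ts. C \<subseteq> set (leaf_list t)")
    case True
    then obtain t where t: "t \<in> set ts" "C \<subseteq> set (leaf_list t)" by blast
    moreover have "wf_tree t" "distinct (leaf_list t)"
      using "2.prems"(1,2) t(1) by (auto simp: distinct_concat_iff)
    ultimately obtain A and g :: "nat \<Rightarrow> rtree set" where split: "lca_split (clades t) C A g"
      using "2.IH" "2.prems"(4) by blast
    then obtain i j where A: "A \<in> clades t" "C \<subseteq> A" and ij: "i \<in> C" "j \<in> C" "g i \<noteq> g j"
      unfolding lca_split_def by blast
    show ?thesis
    proof (intro exI lca_splitI)
      show "A \<in> clades (Node ts)"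
        using A(1) t(1) by auto
      fix k l E
      assume kl: "k \<in> C" "l \<in> C" "g k \<noteq> g l" and E: "E \<in> clades (Node ts)" "{k, l} \<subseteq> E"
      from clade_cases[OF E(1)] show "A \<subseteq> E"
      proof
        assume "E = ?R"
        then show ?thesis
          using clades_subset_leaves[OF A(1)] t(1) by auto
      next
        assume "\<exists>t'\<in>set ts. E \<in> clades t'"
        then obtain t' where t': "t' \<in> set ts" "E \<in> clades t'" by blast
        have "k \<in> set (leaf_list t')"
          using clades_subset_leaves[OF t'(2)] E(2) by blast
        then have "t' = t"
          using same_child t'(1) t kl(1) by blast
        then show ?thesis
          using lca_split_above[OF split kl] t'(2) E(2) by blast
      qed
    qed (use A ij in auto)
  next
    case False
    define g where "g i = {t \<in> set ts. i \<in> set (leaf_list t)}" for i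
    have g_child: "g i = {t}" if "t \<in> set ts" "i \<in> set (leaf_list t)" for t i
      using same_child that unfolding g_def by blast
    obtain i where i: "i \<in> C"
      using "2.prems"(4) by fastforce
    then obtain t where t: "t \<in> set ts" "i \<in> set (leaf_list t)"
      using "2.prems"(3) by auto
    obtain j where j: "j \<in> C" "j \<notin> set (leaf_list t)"
      using False t(1) by blast
    show ?thesis
    proof (intro exI lca_splitI)
      show "g i \<noteq> g j"
        using g_child[OF t] j(2) unfolding g_def by auto
      fix k l E
      assume kl: "g k \<noteq> g l" and E: "E \<in> clades (Node ts)" "{k, l} \<subseteq> E"
      have "E \<notin> clades t'" if "t' \<in> set ts" for t'
        using clades_subset_leaves[of E t'] g_child[OF that, of k] g_child[OF that, of l] kl E(2)
        by auto
      then show "?R \<subseteq> E"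
        using clade_cases[OF E(1)] by blast
    qed (use "2.prems"(3) i j(1) in auto)
  qed
qed

lemma lca_split_clade:
  assumes "is_tree_on n T" "C \<subseteq> {1..n}" "2 \<le> card C"
  obtains A and g :: "nat \<Rightarrow> rtree set" where "lca_split (clade n T) C A g"
proof -
  have "wf_tree T" "distinct (leaf_list T)" "C \<subseteq> set (leaf_list T)"
    using assms(1,2) unfolding is_tree_on_def by auto
  then obtain A and g :: "nat \<Rightarrow> rtree set" where split: "lca_split (clades T) C A g"
    using lca_split_clades assms(3) by blast
  then have "A \<subseteq> {1..n}"
    using clades_subset_leaves assms(1) unfolding lca_split_def is_tree_on_def by blast
  with split have "lca_split (clade n T) C A g"
    unfolding clade_def by (rule lca_split_insert)
  then show thesis by (rule that)
qed

lemma separated_by_both: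
  assumes "\<exists>i\<in>C. \<exists>j\<in>C. f i \<noteq> f j" "\<exists>i\<in>C. \<exists>j\<in>C. g i \<noteq> g j"
  shows "\<exists>i\<in>C. \<exists>j\<in>C. f i \<noteq> f j \<and> g i \<noteq> g j"
proof (rule ccontr)
  assume "\<not> ?thesis"
  then have none: "g i = g j" if "i \<in> C" "j \<in> C" "f i \<noteq> f j" for i j
    using that by blast
  obtain a b where ab: "a \<in> C" "b \<in> C" "f a \<noteq> f b"
    using assms(1) by blast
  have g_const: "g x = g a" if "x \<in> C" for x
  proof (cases "f x = f a")
    case True
    then have "g x = g b"
      using none[OF that ab(2)] ab(3) by simp
    also have "\<dots> = g a"
      using none[OF ab] by simp
    finally show ?thesis .
  next
    case False
    then show ?thesis
      using none[OF that ab(1)] by simp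
  qed
  obtain c d where "c \<in> C" "d \<in> C" "g c \<noteq> g d"
    using assms(2) by blast
  with g_const show False
    by simp
qed

lemma lca_split_Un:
  assumes "lca_split K\<^sub>1 C A\<^sub>1 g\<^sub>1" "lca_split K\<^sub>2 C A\<^sub>2 g\<^sub>2"
  obtains i j where "i \<in> C" "j \<in> C" "i \<noteq> j"
    "\<And>E. E \<in> K\<^sub>1 \<union> K\<^sub>2 \<Longrightarrow> {i, j} \<subseteq> E \<Longrightarrow> A\<^sub>1 \<inter> A\<^sub>2 \<subseteq> E"
proof -
  have "\<exists>i\<in>C. \<exists>j\<in>C. g\<^sub>1 i \<noteq> g\<^sub>1 j" "\<exists>i\<in>C. \<exists>j\<in>C. g\<^sub>2 i \<noteq> g\<^sub>2 j"
    using assms unfolding lca_split_def by blast+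
  from separated_by_both[OF this]
  obtain i j where ij: "i \<in> C" "j \<in> C" "g\<^sub>1 i \<noteq> g\<^sub>1 j" "g\<^sub>2 i \<noteq> g\<^sub>2 j"
    by blast
  show thesis
  proof (rule that)
    show "i \<in> C" "j \<in> C" "i \<noteq> j"
      using ij by auto
    fix E
    assume "E \<in> K\<^sub>1 \<union> K\<^sub>2" "{i, j} \<subseteq> E"
    then show "A\<^sub>1 \<inter> A\<^sub>2 \<subseteq> E"
      using lca_split_above[OF assms(1) ij(1-3)] lca_split_above[OF assms(2) ij(1,2,4)] by blast
  qed
qed

lemma Int_in_cip: "A \<in> S \<Longrightarrow> B \<in> S \<Longrightarrow> 2 \<le> card (A \<inter> B) \<Longrightarrow> A \<inter> B \<in> cip S"
  unfolding cip_def by (auto intro!: exI[of _ "{A, B}"])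

lemma cip_above:
  assumes "\<And>E. E \<in> S \<Longrightarrow> P \<subseteq> E \<Longrightarrow> M \<subseteq> E" "E \<in> cip S" "P \<subseteq> E"
  shows "M \<subseteq> E"
  using assms unfolding cip_def by blast

lemma is_min_containing_subset:
  assumes "is_min_containing S C D" "P \<subseteq> C" "M \<in> cip S" "C \<subseteq> M"
    and "\<And>E. E \<in> S \<Longrightarrow> P \<subseteq> E \<Longrightarrow> M \<subseteq> E"
  shows "is_min_containing S P D"
proof -
  have min: "D \<in> cip S" "C \<subseteq> D" "\<And>E. E \<in> cip S \<Longrightarrow> C \<subseteq> E \<Longrightarrow> D \<subseteq> E"
    using assms(1) unfolding is_min_containing_def by auto
  have "D \<subseteq> M"
    using min(3) assms(3,4) .
  show ?thesis
    unfolding is_min_containing_def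
  proof (intro conjI ballI impI)
    show "D \<in> cip S" "P \<subseteq> D"
      using min(1,2) assms(2) by auto
    fix E
    assume "E \<in> cip S" "P \<subseteq> E"
    with cip_above[OF assms(5)] \<open>D \<subseteq> M\<close> show "D \<subseteq> E"
      by blast
  qed
qed

theorem lemma3p10:
  fixes n :: nat and S :: "nat set set" and C D :: "nat set"
  assumes "S \<in> TP n"
    and "C \<subseteq> {1..n}" and "2 \<le> card C"
    and "is_min_containing S C D"
  shows "\<exists>i\<in>C. \<exists>j\<in>C. i \<noteq> j \<and> is_min_containing S {i, j} D"
proof -
  obtain T\<^sub>1 T\<^sub>2 where S: "S = clade n T\<^sub>1 \<union> clade n T\<^sub>2"
    and T: "is_tree_on n T\<^sub>1" "is_tree_on n T\<^sub>2"
    using assms(1) unfolding TP_def by blast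
  obtain A\<^sub>1 and g\<^sub>1 :: "nat \<Rightarrow> rtree set" where split\<^sub>1: "lca_split (clade n T\<^sub>1) C A\<^sub>1 g\<^sub>1"
    using lca_split_clade[OF T(1) assms(2,3)] .
  obtain A\<^sub>2 and g\<^sub>2 :: "nat \<Rightarrow> rtree set" where split\<^sub>2: "lca_split (clade n T\<^sub>2) C A\<^sub>2 g\<^sub>2"
    using lca_split_clade[OF T(2) assms(2,3)] .
  obtain i j where ij: "i \<in> C" "j \<in> C" "i \<noteq> j"
    and above: "\<And>E. E \<in> S \<Longrightarrow> {i, j} \<subseteq> E \<Longrightarrow> A\<^sub>1 \<inter> A\<^sub>2 \<subseteq> E"
    using lca_split_Un[OF split\<^sub>1 split\<^sub>2] unfolding S by blast
  have A: "A\<^sub>1 \<in> S" "A\<^sub>2 \<in> S" "C \<subseteq> A\<^sub>1 \<inter> A\<^sub>2"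
    using split\<^sub>1 split\<^sub>2 unfolding S lca_split_def by auto
  moreover have "finite A\<^sub>1"
    using split\<^sub>1 clade_subset_atLeastAtMost[OF T(1)] unfolding lca_split_def
    by (meson finite_atLeastAtMost finite_subset)
  ultimately have "card C \<le> card (A\<^sub>1 \<inter> A\<^sub>2)"
    by (intro card_mono) auto
  with A assms(3) have "A\<^sub>1 \<inter> A\<^sub>2 \<in> cip S"
    by (intro Int_in_cip) auto
  with ij above A(3) have "is_min_containing S {i, j} D"
    by (intro is_min_containing_subset[OF assms(4)]) auto
  with ij show ?thesis by blast
qed

end
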